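(* Let $\Sigma,\Gamma$ be finite alphabets, each with at least two letters. Let $w,u\in\Sigma^{\mathbb{N}}$ be infinite words with $w = pu$ for some finite word $p\in\Sigma^*$. Then $\mathrm{ACE}_{\mathcal{I}}(w) = \mathrm{ACE}_{\mathcal{I}}(u)$.
   Context: $\mathrm{Fact}_n(w)$ is the set of length-$n$ factors of $w$. For a nonempty word $v$ and integer $p\ge0$, $v^{p/|v|}$ is the prefix of length $p$ of $vvv\cdots$. For a nonempty finite word $u$, $\mathrm{E}(u) = \sup\{ r \in \mathbb{Q} : u = v^r \text{ for some nonempty } v\}$. For an infinite word $w$, $\mathrm{ACE}(w) = \limsup_{n\to\infty}\sup\{\mathrm{E}(u) : u\in\mathrm{Fact}_n(w)\}$. $\mathcal{I}$ is the set of injective morphisms $\Sigma^*\to\Gamma^*$ and $\mathrm{ACE}_{\mathcal{I}}(w) = \sup\{\mathrm{ACE}(h(w)) : h\in\mathcal{I}\}$. *)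

theory Defs
  imports Complex_Main "HOL-Library.Extended_Real"
begin

definition frac_pow :: "'a list \<Rightarrow> nat \<Rightarrow> 'a list" where
  "frac_pow v p = map (\<lambda>i. v ! (i mod length v)) [0..<p]"

definition is_pow :: "'a list \<Rightarrow> 'a list \<Rightarrow> rat \<Rightarrow> bool" where
  "is_pow u v r \<longleftrightarrow> v \<noteq> [] \<and> (\<exists>p::nat. r * of_nat (length v) = of_nat p \<and> u = frac_pow v p)"

definition E :: "'a list \<Rightarrow> ereal" where
  "E u = Sup {ereal (real_of_rat r) | r. \<exists>v. is_pow u v r}"

definition Fact :: "nat \<Rightarrow> (nat \<Rightarrow> 'a) \<Rightarrow> 'a list set" where
  "Fact n w = {map (\<lambda>i. w (k + i)) [0..<n] | k. True}"

definition ACE :: "(nat \<Rightarrow> 'a) \<Rightarrow> ereal" where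
  "ACE w = limsup (\<lambda>n. Sup (E ` Fact n w))"

definition morph :: "('a \<Rightarrow> 'b list) \<Rightarrow> 'a list \<Rightarrow> 'b list" where
  "morph h xs = concat (map h xs)"

definition inj_morph :: "('a \<Rightarrow> 'b list) \<Rightarrow> bool" where
  "inj_morph h \<longleftrightarrow> inj (morph h)"

text \<open>Image of an infinite word under a nonerasing morphism (injective morphisms are nonerasing):
  the i-th letter of h(w) is the i-th letter of h(w_0 ... w_i).\<close>
definition morph_inf :: "('a \<Rightarrow> 'b list) \<Rightarrow> (nat \<Rightarrow> 'a) \<Rightarrow> (nat \<Rightarrow> 'b)" where
  "morph_inf h w = (\<lambda>i. morph h (map w [0..<Suc i]) ! i)"

definition ACE_I :: "'b itself \<Rightarrow> (nat \<Rightarrow> 'a) \<Rightarrow> ereal" where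
  "ACE_I (_::'b itself) w = Sup {ACE (morph_inf h w) | h :: 'a \<Rightarrow> 'b list. inj_morph h}"

definition app_inf :: "'a list \<Rightarrow> (nat \<Rightarrow> 'a) \<Rightarrow> (nat \<Rightarrow> 'a)" where
  "app_inf p u = (\<lambda>i. if i < length p then p ! i else u (i - length p))"

end

theory Submission
  imports Defs "HOL-Analysis.Extended_Real_Limits"
begin

text \<open>
  An injective morphism \<open>h\<close> is nonerasing, so \<open>h(p u) = h(p) h(u)\<close> and it suffices to show that
  \<open>ACE\<close> is unchanged by prepending a single letter \<open>a\<close>. Every factor of \<open>u\<close> is a factor of \<open>a u\<close>;
  conversely a factor of \<open>a u\<close> of length \<open>m + 1\<close> is a factor of \<open>u\<close> or has the form \<open>a y\<close> with
  \<open>y\<close> a factor of \<open>u\<close> of length \<open>m\<close>. If \<open>a y = v\<^sup>r\<close> then \<open>y\<close> is a power of a conjugate of \<open>v\<close>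
  with exponent \<open>r m / (m + 1)\<close>, so \<open>E(a y) \<le> (m + 1)/m \<cdot> E(y)\<close>, and the factor \<open>(m + 1)/m\<close>
  tends to \<open>1\<close>, which does not change the limit superior.
\<close>

lemma Limsup_max_le:
  fixes f g :: "_ \<Rightarrow> 'a :: complete_linorder"
  shows "Limsup F (\<lambda>x. max (f x) (g x)) \<le> max (Limsup F f) (Limsup F g)"
proof (unfold Limsup_le_iff, intro allI impI)
  fix y assume "y > max (Limsup F f) (Limsup F g)"
  then have "eventually (\<lambda>x. f x < y) F" "eventually (\<lambda>x. g x < y) F"
    by (auto intro: Limsup_lessD)
  then show "eventually (\<lambda>x. y > max (f x) (g x)) F"
    by eventually_elim simp
qed

lemma length_frac_pow [simp]: "length (frac_pow v p) = p"
  by (simp add: frac_pow_def)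

lemma tl_frac_pow_Suc:
  assumes "v \<noteq> []"
  shows "tl (frac_pow v (Suc m)) = frac_pow (rotate1 v) m"
proof (rule nth_equalityI)
  fix i assume "i < length (tl (frac_pow v (Suc m)))"
  then have "i < m" by simp
  then show "tl (frac_pow v (Suc m)) ! i = frac_pow (rotate1 v) m ! i"
    using assms by (simp add: frac_pow_def nth_tl nth_rotate1 mod_Suc_eq del: upt_Suc)
qed simp

lemma E_Cons_le:
  assumes "y \<noteq> []"
  shows "E (a # y) \<le> ereal (real (Suc (length y)) / real (length y)) * E y"
  unfolding E_def[of "a # y"]
proof (rule Sup_least)
  define m where "m = length y"
  fix z assume "z \<in> {ereal (real_of_rat r) |r. \<exists>v. is_pow (a # y) v r}"
  then obtain r v p where z: "z = ereal (real_of_rat r)" and v: "v \<noteq> []"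
    and rp: "r * of_nat (length v) = of_nat p" and pow: "a # y = frac_pow v p"
    unfolding is_pow_def by blast
  have p: "p = Suc m"
    using arg_cong[OF pow, of length] by (simp add: m_def)
  have "y = frac_pow (rotate1 v) m"
    using arg_cong[OF pow, of tl] tl_frac_pow_Suc[OF v, of m] p by simp
  then have "is_pow y (rotate1 v) (of_nat m / of_nat (length v))"
    unfolding is_pow_def using v by (intro conjI exI[of _ m]) auto
  then have "ereal (real_of_rat (of_nat m / of_nat (length v))) \<le> E y"
    unfolding E_def by (intro Sup_upper) blast
  then have Ey: "ereal (real m / real (length v)) \<le> E y"
    by (simp add: of_rat_divide)
  have "r = of_nat (Suc m) / of_nat (length v)"
    using rp p v by (simp add: eq_divide_eq)
  moreover have "m > 0"
    using assms by (simp add: m_def)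
  ultimately have "z = ereal (real (Suc m) / real m) * ereal (real m / real (length v))"
    using z by (simp add: of_rat_divide of_rat_add)
  also have "\<dots> \<le> ereal (real (Suc m) / real m) * E y"
    by (rule ereal_mult_left_mono[OF Ey]) simp
  finally show "z \<le> ereal (real (Suc (length y)) / real (length y)) * E y"
    by (simp add: m_def)
qed

lemma length_Fact: "x \<in> Fact n w \<Longrightarrow> length x = n"
  by (auto simp: Fact_def)

lemma Fact_tail_subset: "Fact n (\<lambda>i. w (Suc i)) \<subseteq> Fact n w"
  unfolding Fact_def by (auto intro: exI[of _ "Suc _"])

lemma Fact_Suc_subset:
  "Fact (Suc m) w \<subseteq> Fact (Suc m) (\<lambda>i. w (Suc i)) \<union> Cons (w 0) ` Fact m (\<lambda>i. w (Suc i))"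
proof
  fix x assume "x \<in> Fact (Suc m) w"
  then obtain k where x: "x = map (\<lambda>i. w (k + i)) [0..<Suc m]"
    unfolding Fact_def by blast
  show "x \<in> Fact (Suc m) (\<lambda>i. w (Suc i)) \<union> Cons (w 0) ` Fact m (\<lambda>i. w (Suc i))"
  proof (cases k)
    case 0
    then have "x = w 0 # map (\<lambda>i. w (Suc (0 + i))) [0..<m]"
      by (simp add: x upt_conv_Cons map_Suc_upt[symmetric] del: upt_Suc)
    then show ?thesis
      unfolding Fact_def by blast
  next
    case (Suc k')
    then have "x = map (\<lambda>i. w (Suc (k' + i))) [0..<Suc m]"
      by (simp add: x del: upt_Suc)
    then show ?thesis
      unfolding Fact_def by blast
  qed
qed

lemma SUP_E_Fact_Suc_le:
  assumes "m \<ge> 1"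
  shows "Sup (E ` Fact (Suc m) w) \<le>
    max (Sup (E ` Fact (Suc m) (\<lambda>i. w (Suc i))))
        (ereal (real (Suc m) / real m) * Sup (E ` Fact m (\<lambda>i. w (Suc i))))"
proof (rule SUP_least)
  fix x assume "x \<in> Fact (Suc m) w"
  with Fact_Suc_subset consider "x \<in> Fact (Suc m) (\<lambda>i. w (Suc i))"
    | y where "y \<in> Fact m (\<lambda>i. w (Suc i))" "x = w 0 # y"
    by blast
  then show "E x \<le> max (Sup (E ` Fact (Suc m) (\<lambda>i. w (Suc i))))
      (ereal (real (Suc m) / real m) * Sup (E ` Fact m (\<lambda>i. w (Suc i))))"
  proof cases
    case 1
    then show ?thesis
      by (intro max.coboundedI1 SUP_upper)
  next
    case (2 y)
    then have "E x \<le> ereal (real (Suc m) / real m) * E y"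
      using E_Cons_le[of y "w 0"] length_Fact[of y] assms by force
    also have "\<dots> \<le> ereal (real (Suc m) / real m) * Sup (E ` Fact m (\<lambda>i. w (Suc i)))"
      using 2 by (intro ereal_mult_left_mono SUP_upper) auto
    finally show ?thesis
      by (rule max.coboundedI2)
  qed
qed

lemma ACE_le_ACE_tail: "ACE w \<le> ACE (\<lambda>i. w (Suc i))"
proof -
  define s where "s n = Sup (E ` Fact n w)" for n
  define t where "t n = Sup (E ` Fact n (\<lambda>i. w (Suc i)))" for n
  define c where "c n = ereal (real (Suc n) / real n)" for n
  have "c \<longlonglongrightarrow> 1"
    unfolding c_def one_ereal_def lim_ereal by (rule LIMSEQ_Suc_n_over_n)
  have "ACE w = limsup (\<lambda>m. s (m + 1))"
    unfolding ACE_def s_def by (rule limsup_shift[symmetric])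
  also have "\<dots> \<le> limsup (\<lambda>m. max (t (m + 1)) (c m * t m))"
    unfolding s_def t_def c_def
    by (intro Limsup_mono eventually_sequentiallyI[of 1]) (metis SUP_E_Fact_Suc_le Suc_eq_plus1)
  also have "\<dots> \<le> max (limsup (\<lambda>m. t (m + 1))) (limsup (\<lambda>m. c m * t m))"
    by (rule Limsup_max_le)
  also have "\<dots> = limsup t"
    using ereal_limsup_lim_mult[OF \<open>c \<longlonglongrightarrow> 1\<close>] limsup_shift[of t] by simp
  finally show ?thesis
    unfolding ACE_def t_def .
qed

lemma ACE_tail: "ACE (\<lambda>i. w (Suc i)) = ACE w"
proof (rule antisym)
  show "ACE (\<lambda>i. w (Suc i)) \<le> ACE w"
    unfolding ACE_def
    by (intro Limsup_mono always_eventually allI SUP_subset_mono Fact_tail_subset order_refl)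
qed (rule ACE_le_ACE_tail)

lemma ACE_app_inf: "ACE (app_inf p u) = ACE u"
proof (induction p)
  case Nil
  then show ?case
    by (simp add: app_inf_def)
next
  case (Cons a p)
  have "(\<lambda>i. app_inf (a # p) u (Suc i)) = app_inf p u"
    by (simp add: app_inf_def fun_eq_iff)
  then show ?case
    using ACE_tail[of "app_inf (a # p) u"] Cons.IH by simp
qed

lemma morph_append [simp]: "morph h (xs @ ys) = morph h xs @ morph h ys"
  by (simp add: morph_def)

lemma inj_morph_nonerasing:
  assumes "inj_morph h"
  shows "[] \<notin> range h"
proof
  assume "[] \<in> range h"
  then obtain x where "h x = []"
    by (metis rangeE)
  then have "morph h [x] = morph h []"
    by (simp add: morph_def)
  with assms show False
    unfolding inj_morph_def by (auto dest: injD)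
qed

lemma length_le_length_morph:
  assumes "[] \<notin> range h"
  shows "length xs \<le> length (morph h xs)"
proof (induction xs)
  case (Cons a xs)
  have "h a \<noteq> []"
    using assms by (metis rangeI)
  with Cons show ?case
    by (cases "h a") (auto simp: morph_def)
qed simp

lemma nth_morph_map_upt:
  assumes "[] \<notin> range h" and "i < m"
  shows "morph h (map w [0..<m]) ! i = morph_inf h w i"
proof -
  have "[0..<m] = [0..<Suc i] @ [Suc i..<m]"
    using assms(2) upt_add_eq_append[of 0 "Suc i" "m - Suc i"] by simp
  moreover have "i < length (morph h (map w [0..<Suc i]))"
    using length_le_length_morph[OF assms(1), of "map w [0..<Suc i]"] by simp
  ultimately show ?thesis
    by (simp add: nth_append morph_inf_def del: upt_Suc)
qed

lemma morph_inf_app_inf: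
  assumes "[] \<notin> range h"
  shows "morph_inf h (app_inf p u) = app_inf (morph h p) (morph_inf h u)"
proof
  fix i
  have prefix: "map (app_inf p u) [0..<length p + Suc i] = p @ map u [0..<Suc i]"
    by (rule nth_equalityI) (auto simp: app_inf_def nth_append simp del: upt_Suc)
  have "morph_inf h (app_inf p u) i = (morph h p @ morph h (map u [0..<Suc i])) ! i"
    using nth_morph_map_upt[OF assms, of i "length p + Suc i" "app_inf p u", unfolded prefix]
    by simp
  also have "\<dots> = app_inf (morph h p) (morph_inf h u) i"
    using nth_morph_map_upt[OF assms, of "i - length (morph h p)" "Suc i" u]
    by (auto simp: nth_append app_inf_def simp del: upt_Suc)
  finally show "morph_inf h (app_inf p u) i = app_inf (morph h p) (morph_inf h u) i" .
qed

theorem theorem20: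
  fixes w u :: "nat \<Rightarrow> 'a::finite" and p :: "'a list"
  assumes "card (UNIV :: 'a set) \<ge> 2" and "card (UNIV :: 'b::finite set) \<ge> 2"
    and "w = app_inf p u"
  shows "ACE_I TYPE('b) w = ACE_I TYPE('b) u"
proof -
  have "ACE (morph_inf h w) = ACE (morph_inf h u)" if "inj_morph h" for h :: "'a \<Rightarrow> 'b list"
    using assms(3) morph_inf_app_inf[OF inj_morph_nonerasing[OF that]] ACE_app_inf by metis
  then show ?thesis
    unfolding ACE_I_def by (intro arg_cong[where f = Sup] Collect_cong) metis
qed

end
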